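(* Let $n>m=0$, $d\ge1$, $a\in\mathbb{C}^\times$, and $f_a(x_2,\dots,x_n)=\sum_{i=2}^nx_i^d+a/\prod_{i=2}^nx_i^d$. Then: (1) $f_a$ is convenient, i.e. the origin lies in the interior of $\Delta(f_a)$; (2) $\Delta(f_a)$ is the set of $(u_2,\dots,u_n)\in\mathbb{R}^{n-1}$ satisfying $h_{n+1}:=\sum_{i=2}^nu_i\le d$ and $h_{i_0}:=\sum_{i=2}^nu_i-n\,u_{i_0}\le d$ for $2\le i_0\le n$; (3) $f_a$ is non-degenerate with respect to $\Delta(f_a)$.
   Context: For a Laurent polynomial $g=\sum_\tau c(\tau)z^\tau$ in $N$ variables, $\mathrm{Supp}(g)=\{\tau:c(\tau)\ne0\}$, the Newton polytope $\Delta(g)$ is the convex hull of $\mathrm{Supp}(g)\cup\{0\}$ in $\mathbb{R}^N$, and $g$ is non-degenerate with respect to $\Delta(g)$ if for each face $\sigma$ of $\Delta(g)$ not containing $0$, $g_\sigma=\sum_{\tau\in\sigma\cap\mathbb{Z}^N}c(\tau)z^\tau$ has no critical point in $(\mathbb{C}^\times)^N$. A monomial $\prod x_i^{u_i}$ is identified with the lattice point $(u_2,\dots,u_n)$. *)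

theory Defs
  imports "HOL-Analysis.Analysis"
begin

text \<open>Laurent polynomials in the variables indexed by the finite type 'n, given by
  their coefficient function on the lattice int^'n (finite support assumed where needed).\<close>

definition lsupp :: "(int^'n \<Rightarrow> complex) \<Rightarrow> (int^'n) set" where
  "lsupp c = {\<tau>. c \<tau> \<noteq> 0}"

definition lat_to_real :: "int^'n \<Rightarrow> real^'n" where
  "lat_to_real \<tau> = (\<chi> j. real_of_int (\<tau> $ j))"

definition newton_polytope :: "(int^'n::finite \<Rightarrow> complex) \<Rightarrow> (real^'n) set" where
  "newton_polytope c = convex hull (lat_to_real ` lsupp c \<union> {0})"

definition laurent_eval :: "(int^'n::finite \<Rightarrow> complex) \<Rightarrow> complex^'n \<Rightarrow> complex" where
  "laurent_eval c z = (\<Sum>\<tau>\<in>lsupp c. c \<tau> * (\<Prod>j\<in>UNIV. (z $ j) powi (\<tau> $ j)))"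

definition face_part :: "(int^'n \<Rightarrow> complex) \<Rightarrow> (real^'n) set \<Rightarrow> (int^'n \<Rightarrow> complex)" where
  "face_part c \<sigma> = (\<lambda>\<tau>. if lat_to_real \<tau> \<in> \<sigma> then c \<tau> else 0)"

definition critical_point_torus :: "(int^'n::finite \<Rightarrow> complex) \<Rightarrow> complex^'n \<Rightarrow> bool" where
  "critical_point_torus c z \<longleftrightarrow> (\<forall>j. z $ j \<noteq> 0) \<and>
     (\<forall>j. ((\<lambda>w. laurent_eval c (\<chi> k. if k = j then w else z $ k)) has_field_derivative 0) (at (z $ j)))"

definition convenient :: "(int^'n::finite \<Rightarrow> complex) \<Rightarrow> bool" where
  "convenient c \<longleftrightarrow> 0 \<in> interior (newton_polytope c)"

text \<open>Non-degeneracy w.r.t. the Newton polytope; faces are taken nonempty (the empty face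
  would give the zero polynomial).\<close>
definition nondegenerate :: "(int^'n::finite \<Rightarrow> complex) \<Rightarrow> bool" where
  "nondegenerate c \<longleftrightarrow> (\<forall>\<sigma>. \<sigma> face_of newton_polytope c \<and> \<sigma> \<noteq> {} \<and> 0 \<notin> \<sigma> \<longrightarrow>
       \<not> (\<exists>z. critical_point_torus (face_part c \<sigma>) z))"

text \<open>f_a = sum_j x_j^d + a / prod_j x_j^d, as a coefficient function.\<close>
definition f_coeff :: "nat \<Rightarrow> complex \<Rightarrow> int^'n \<Rightarrow> complex" where
  "f_coeff d a \<tau> = (if \<exists>j. \<tau> = (\<chi> k. if k = j then int d else 0) then 1 else 0)
                  + (if \<tau> = (\<chi> k. - int d) then a else 0)"

end

theory Submission
  imports Defs
begin

text \<open>The support of \<open>f\<^sub>a\<close> consists of the points \<open>p\<^sub>j = d e\<^sub>j\<close> and \<open>q = -d (1,\<dots>,1)\<close>.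
  Since \<open>0 = (q + \<Sum>\<^sub>j p\<^sub>j) / n\<close>, the origin is an interior point of their convex hull, a simplex
  whose facets lie on the hyperplanes \<open>h = d\<close>; conversely a point \<open>u\<close> satisfying the
  inequalities is the combination \<open>\<mu> q + \<Sum>\<^sub>j (u\<^sub>j/d + \<mu>) p\<^sub>j\<close> with
  \<open>\<mu> = max(0, max\<^sub>j (-u\<^sub>j/d))\<close>, whose total weight is at most 1.
  A face \<open>\<sigma>\<close> avoiding 0 cannot contain all vertices. If \<open>q \<notin> \<sigma>\<close>, some \<open>p\<^sub>j \<in> \<sigma>\<close> and the variable
  \<open>x\<^sub>j\<close> occurs in \<open>g\<^sub>\<sigma>\<close> only through \<open>x\<^sub>j\<^sup>d\<close>; if \<open>q \<in> \<sigma>\<close>, some \<open>p\<^sub>j \<notin> \<sigma>\<close> and \<open>x\<^sub>j\<close> occurs only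
  in \<open>a / \<Prod> x\<^sub>i\<^sup>d\<close>. Either way \<open>\<partial>g\<^sub>\<sigma>/\<partial>x\<^sub>j\<close> is a single nonzero monomial, which has no zero
  on the torus.\<close>

lemma no_critical_point_if_variable_in_single_monomial:
  fixes g :: "int^'n::finite \<Rightarrow> complex"
  assumes fin: "finite (lsupp g)" and t0: "t0 \<in> lsupp g" and t0j: "t0 $ j \<noteq> 0"
    and others: "\<And>t. t \<in> lsupp g - {t0} \<Longrightarrow> t $ j = 0"
  shows "\<not> critical_point_torus g z"
proof
  assume crit: "critical_point_torus g z"
  then have z: "z $ k \<noteq> 0" for k
    by (simp add: critical_point_torus_def)
  define P where "P = (\<Prod>k\<in>UNIV - {j}. z $ k powi (t0 $ k))"
  define B where "B = (\<Sum>t\<in>lsupp g - {t0}. g t * (\<Prod>k\<in>UNIV. z $ k powi (t $ k)))"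
  have eval: "laurent_eval g (\<chi> k. if k = j then w else z $ k) = g t0 * P * w powi (t0 $ j) + B"
    for w
  proof -
    let ?z = "\<chi> k. if k = j then w else z $ k"
    have "laurent_eval g ?z = g t0 * (\<Prod>k\<in>UNIV. ?z $ k powi (t0 $ k))
         + (\<Sum>t\<in>lsupp g - {t0}. g t * (\<Prod>k\<in>UNIV. ?z $ k powi (t $ k)))"
      unfolding laurent_eval_def using fin t0 by (simp add: sum.remove)
    also have "(\<Prod>k\<in>UNIV. ?z $ k powi (t0 $ k)) = w powi (t0 $ j) * P"
      unfolding P_def by (subst prod.remove[of UNIV j]) (auto intro!: prod.cong)
    also have "(\<Sum>t\<in>lsupp g - {t0}. g t * (\<Prod>k\<in>UNIV. ?z $ k powi (t $ k))) = B"
      unfolding B_def using others by (auto intro!: sum.cong prod.cong)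
    finally show ?thesis
      by (simp add: algebra_simps)
  qed
  have "((\<lambda>w. laurent_eval g (\<chi> k. if k = j then w else z $ k)) has_field_derivative 0) (at (z $ j))"
    using crit by (simp add: critical_point_torus_def)
  then have "((\<lambda>w. g t0 * P * w powi (t0 $ j) + B) has_field_derivative 0) (at (z $ j))"
    unfolding eval .
  moreover have "((\<lambda>w. g t0 * P * w powi (t0 $ j) + B) has_field_derivative
      g t0 * P * (of_int (t0 $ j) * z $ j powi (t0 $ j - 1))) (at (z $ j))"
    using z by (auto intro!: derivative_eq_intros)
  ultimately have "g t0 * P * (of_int (t0 $ j) * z $ j powi (t0 $ j - 1)) = 0"
    using DERIV_unique by blast
  moreover have "g t0 \<noteq> 0"
    using t0 by (simp add: lsupp_def)
  moreover have "P \<noteq> 0"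
    unfolding P_def using z by simp
  ultimately show False
    using t0j z by simp
qed

lemma convex_sum_le_one:
  fixes C :: "'a::real_vector set"
  assumes "finite A" "convex C" "0 \<in> C" "\<And>i. i \<in> A \<Longrightarrow> x i \<in> C"
    and "\<And>i. i \<in> A \<Longrightarrow> w i \<ge> 0" "sum w A \<le> 1"
  shows "(\<Sum>i\<in>A. w i *\<^sub>R x i) \<in> C"
proof (cases "sum w A = 0")
  case True
  then have "\<forall>i\<in>A. w i = 0"
    using assms sum_nonneg_eq_0_iff by blast
  then show ?thesis
    using assms by simp
next
  case False
  define W where "W = sum w A"
  have W: "W > 0"
    using False assms sum_nonneg unfolding W_def by (metis order_le_less)
  have "(\<Sum>i\<in>A. (w i / W) *\<^sub>R x i) \<in> C"
    using assms W by (intro convex_sum) (auto simp: W_def sum_divide_distrib[symmetric])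
  then have "W *\<^sub>R (\<Sum>i\<in>A. (w i / W) *\<^sub>R x i) + (1 - W) *\<^sub>R 0 \<in> C"
    using assms W by (intro convexD) (auto simp: W_def)
  moreover have "W *\<^sub>R (\<Sum>i\<in>A. (w i / W) *\<^sub>R x i) = (\<Sum>i\<in>A. w i *\<^sub>R x i)"
    using W by (simp add: scaleR_sum_right)
  ultimately show ?thesis
    by simp
qed

lemma sum_UNIV_option: "sum f (UNIV :: 'a::finite option set) = f None + (\<Sum>j\<in>UNIV. f (Some j))"
proof -
  have "sum f (UNIV :: 'a option set) = sum f (insert None (range Some))"
    by (simp add: UNIV_option_conv[symmetric])
  also have "\<dots> = f None + sum f (range Some)"
    by (subst sum.insert) auto
  also have "sum f (range Some) = (\<Sum>j\<in>UNIV. f (Some j))"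
    by (subst sum.reindex) auto
  finally show ?thesis .
qed

definition power_exponent :: "nat \<Rightarrow> 'n::finite \<Rightarrow> int^'n" where
  "power_exponent d j = (\<chi> k. if k = j then int d else 0)"

definition inverse_exponent :: "nat \<Rightarrow> int^'n::finite" where
  "inverse_exponent d = (\<chi> k. - int d)"

definition power_vertex :: "nat \<Rightarrow> 'n::finite \<Rightarrow> real^'n" where
  "power_vertex d j = (\<chi> k. if k = j then real d else 0)"

definition inverse_vertex :: "nat \<Rightarrow> real^'n::finite" where
  "inverse_vertex d = (\<chi> k. - real d)"

lemma power_exponent_component: "power_exponent d j $ k = (if k = j then int d else 0)"
  by (simp add: power_exponent_def)

lemma power_exponent_ne_inverse_exponent: "d \<ge> 1 \<Longrightarrow> power_exponent d j \<noteq> inverse_exponent d"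
  by (auto simp: power_exponent_def inverse_exponent_def vec_eq_iff)

lemma lsupp_f_coeff:
  assumes "d \<ge> 1" and "a \<noteq> 0"
  shows "lsupp (f_coeff d a :: int^'n::finite \<Rightarrow> complex)
    = insert (inverse_exponent d) (range (power_exponent d))"
  unfolding lsupp_def f_coeff_def power_exponent_def[symmetric] inverse_exponent_def[symmetric]
  using power_exponent_ne_inverse_exponent[OF assms(1)] assms(2) by auto

lemma lat_to_real_power_exponent: "lat_to_real (power_exponent d j) = power_vertex d j"
  by (auto simp: lat_to_real_def power_exponent_def power_vertex_def vec_eq_iff)

lemma lat_to_real_inverse_exponent: "lat_to_real (inverse_exponent d :: int^'n::finite) = inverse_vertex d"
  by (auto simp: lat_to_real_def inverse_exponent_def inverse_vertex_def vec_eq_iff)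

lemma newton_polytope_f_coeff:
  assumes "d \<ge> 1" and "a \<noteq> 0"
  shows "newton_polytope (f_coeff d a :: int^'n::finite \<Rightarrow> complex)
    = convex hull (insert 0 (insert (inverse_vertex d) (range (power_vertex d))))"
  unfolding newton_polytope_def lsupp_f_coeff[OF assms]
  by (simp add: image_image lat_to_real_power_exponent lat_to_real_inverse_exponent)

definition halfspace_polytope :: "nat \<Rightarrow> nat \<Rightarrow> (real^'n::finite) set" where
  "halfspace_polytope d n = {u. (\<Sum>i\<in>UNIV. u $ i) \<le> real d \<and>
     (\<forall>i0. (\<Sum>i\<in>UNIV. u $ i) - real n * u $ i0 \<le> real d)}"

lemma convex_halfspace_polytope: "convex (halfspace_polytope d n)"
proof -
  have sublevel: "convex {u. f u \<le> real d}" if "linear f" for f :: "real^'n \<Rightarrow> real"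
    using convex_linear_vimage[OF that, of "{..real d}"] by (simp add: vimage_def)
  have "halfspace_polytope d n = {u. (\<Sum>i\<in>UNIV. u $ i) \<le> real d} \<inter>
      (\<Inter>i0. {u. (\<Sum>i\<in>UNIV. u $ i) - real n * u $ i0 \<le> real d})"
    unfolding halfspace_polytope_def by auto
  also have "convex \<dots>"
    by (intro convex_Int convex_INT sublevel)
      (auto simp: linear_iff sum.distrib sum_distrib_left algebra_simps)
  finally show ?thesis .
qed

lemma convex_hull_vertices_subset_halfspace_polytope:
  assumes "n = CARD('n::finite) + 1"
  shows "convex hull (insert 0 (insert (inverse_vertex d) (range (power_vertex d))))
    \<subseteq> (halfspace_polytope d n :: (real^'n) set)"
proof (rule hull_minimal[where S=convex, OF _ convex_halfspace_polytope])
  have "power_vertex d j \<in> (halfspace_polytope d n :: (real^'n) set)" for j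
    by (simp add: halfspace_polytope_def power_vertex_def)
  moreover have "inverse_vertex d \<in> (halfspace_polytope d n :: (real^'n) set)"
    using assms by (auto simp: halfspace_polytope_def inverse_vertex_def algebra_simps intro: order_trans[of _ 0])
  moreover have "0 \<in> (halfspace_polytope d n :: (real^'n) set)"
    by (simp add: halfspace_polytope_def)
  ultimately show "insert 0 (insert (inverse_vertex d) (range (power_vertex d)))
      \<subseteq> (halfspace_polytope d n :: (real^'n) set)"
    by auto
qed

text \<open>\<open>\<nu> / d\<close> is the weight of \<open>q\<close> when \<open>u\<close> is written as a combination of the vertices.\<close>
lemma halfspace_polytope_vertex_weight:
  assumes "u \<in> halfspace_polytope d n"
  obtains \<nu> :: real where "\<nu> \<ge> 0" "\<And>j. u $ j + \<nu> \<ge> 0"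
    "(\<Sum>i\<in>UNIV. u $ i) + real n * \<nu> \<le> real d"
proof -
  define V where "V = insert 0 (range (\<lambda>j. - u $ j))"
  have "finite V"
    unfolding V_def by simp
  have "Max V \<ge> 0" "u $ j + Max V \<ge> 0" for j
    using Max_ge[OF \<open>finite V\<close>, of 0] Max_ge[OF \<open>finite V\<close>, of "- u $ j"] unfolding V_def by auto
  moreover have "(\<Sum>i\<in>UNIV. u $ i) + real n * Max V \<le> real d"
  proof -
    have "Max V \<in> V"
      using \<open>finite V\<close> by (rule Max_in) (simp add: V_def)
    then consider "Max V = 0" | i0 where "Max V = - u $ i0"
      unfolding V_def by blast
    then show ?thesis
      using assms unfolding halfspace_polytope_def by cases auto
  qed
  ultimately show thesis
    using that by blast
qed

lemma halfspace_polytope_subset_convex_hull_vertices: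
  assumes n: "n = CARD('n::finite) + 1" and d: "d \<ge> 1"
  shows "(halfspace_polytope d n :: (real^'n) set)
    \<subseteq> convex hull (insert 0 (insert (inverse_vertex d) (range (power_vertex d))))"
proof
  fix u :: "real^'n"
  assume "u \<in> halfspace_polytope d n"
  then obtain \<nu> where \<nu>: "\<nu> \<ge> 0" "\<And>j. u $ j + \<nu> \<ge> 0"
    "(\<Sum>i\<in>UNIV. u $ i) + real n * \<nu> \<le> real d"
    by (elim halfspace_polytope_vertex_weight) blast
  have dpos: "real d > 0"
    using d by simp
  define w :: "'n option \<Rightarrow> real" where
    "w i = (case i of None \<Rightarrow> \<nu> | Some j \<Rightarrow> u $ j + \<nu>) / real d" for i
  define x :: "'n option \<Rightarrow> real^'n" where
    "x i = (case i of None \<Rightarrow> inverse_vertex d | Some j \<Rightarrow> power_vertex d j)" for i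
  have w_nonneg: "w i \<ge> 0" for i
    using \<nu> dpos unfolding w_def by (cases i) auto
  have "sum w UNIV = (\<nu> + (\<Sum>j\<in>UNIV. u $ j + \<nu>)) / real d"
    unfolding sum_UNIV_option w_def by (simp add: sum_divide_distrib add_divide_distrib)
  also have "\<nu> + (\<Sum>j\<in>UNIV. u $ j + \<nu>) = (\<Sum>i\<in>UNIV. u $ i) + real n * \<nu>"
    using n by (simp add: sum.distrib algebra_simps)
  finally have w_sum: "sum w UNIV \<le> 1"
    using \<nu>(3) dpos by simp
  have "(\<Sum>i\<in>UNIV. w i *\<^sub>R x i) $ k = u $ k" for k
  proof -
    have "(\<Sum>i\<in>UNIV. w i *\<^sub>R x i) $ k
        = - \<nu> + (\<Sum>j\<in>UNIV. (u $ j + \<nu>) / real d * (if k = j then real d else 0))"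
      unfolding sum_component sum_UNIV_option w_def x_def
      using dpos by (simp add: inverse_vertex_def power_vertex_def)
    also have "\<dots> = u $ k"
      using dpos by (simp add: if_distrib[where f="\<lambda>t. _ * t"] cong: if_cong)
    finally show ?thesis .
  qed
  then have "u = (\<Sum>i\<in>UNIV. w i *\<^sub>R x i)"
    by (simp add: vec_eq_iff)
  also have "\<dots> \<in> convex hull (insert 0 (insert (inverse_vertex d) (range (power_vertex d))))"
    using w_nonneg w_sum
    by (intro convex_sum_le_one) (auto simp: x_def hull_inc split: option.splits)
  finally show "u \<in> convex hull (insert 0 (insert (inverse_vertex d) (range (power_vertex d))))" .
qed

lemma zero_in_interior_halfspace_polytope:
  assumes n: "n = CARD('n::finite) + 1" and d: "d \<ge> 1"
  shows "(0::real^'n) \<in> interior (halfspace_polytope d n)"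
proof -
  define e where "e = real d / (2 * real n)"
  have e: "e > 0" "real n * e = real d / 2"
    unfolding e_def using d n by (auto simp: field_simps)
  have "ball 0 e \<subseteq> (halfspace_polytope d n :: (real^'n) set)"
  proof
    fix u :: "real^'n"
    assume "u \<in> ball 0 e"
    then have u_i: "\<bar>u $ i\<bar> < e" for i
      using component_le_norm_cart[of u i] by simp
    have "\<bar>\<Sum>i\<in>UNIV. u $ i\<bar> \<le> (\<Sum>i\<in>UNIV. \<bar>u $ i\<bar>)"
      by (rule sum_abs)
    also have "\<dots> \<le> real CARD('n) * e"
      using sum_bounded_above[of UNIV "\<lambda>i. \<bar>u $ i\<bar>" e] u_i by (simp add: less_imp_le)
    also have "\<dots> \<le> real n * e - e"
      using n by (simp add: algebra_simps)
    finally have sum_bound: "\<bar>\<Sum>i\<in>UNIV. u $ i\<bar> \<le> real n * e - e" .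
    have scaled_bound: "\<bar>real n * u $ i0\<bar> \<le> real n * e" for i0
      using u_i[of i0] by (simp add: abs_mult mult_left_mono less_imp_le)
    have "(\<Sum>i\<in>UNIV. u $ i) - real n * u $ i0 \<le> real d" for i0
      using sum_bound scaled_bound[of i0] e unfolding abs_le_iff by linarith
    moreover have "(\<Sum>i\<in>UNIV. u $ i) \<le> real d"
      using sum_bound e unfolding abs_le_iff by linarith
    ultimately show "u \<in> halfspace_polytope d n"
      unfolding halfspace_polytope_def by blast
  qed
  then show ?thesis
    using e by (meson mem_interior)
qed

lemma zero_in_convex_if_vertices_in:
  assumes cv: "convex \<sigma>" and q: "inverse_vertex d \<in> \<sigma>"
    and p: "\<And>j. power_vertex d j \<in> (\<sigma> :: (real^'n::finite) set)"
  shows "0 \<in> \<sigma>"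
proof -
  define N where "N = real CARD('n)"
  have N: "N > 0"
    unfolding N_def by simp
  have "(\<Sum>j\<in>UNIV. (1 / N) *\<^sub>R power_vertex d j) \<in> \<sigma>"
    using p N by (intro convex_sum[OF _ cv]) (auto simp: N_def)
  also have "(\<Sum>j\<in>UNIV. (1 / N) *\<^sub>R power_vertex d j) = (\<chi> k. real d / N)"
    by (simp add: vec_eq_iff power_vertex_def N_def sum_divide_distrib[symmetric])
  finally have "(1 / (N + 1)) *\<^sub>R inverse_vertex d + (N / (N + 1)) *\<^sub>R (\<chi> k. real d / N) \<in> \<sigma>"
    using N q by (intro convexD[OF cv]) (auto simp: field_simps)
  also have "(1 / (N + 1)) *\<^sub>R inverse_vertex d + (N / (N + 1)) *\<^sub>R (\<chi> k. real d / N) = 0"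
    using N by (simp add: vec_eq_iff inverse_vertex_def field_simps)
  finally show ?thesis .
qed

lemma lsupp_face_part: "lsupp (face_part c \<sigma>) = {t \<in> lsupp c. lat_to_real t \<in> \<sigma>}"
  by (auto simp: lsupp_def face_part_def)

lemma face_of_convex_hull_meets_points:
  fixes V :: "'a::euclidean_space set"
  assumes "finite V" and "F face_of convex hull V" and "F \<noteq> {}"
  obtains x where "x \<in> V" and "x \<in> F"
proof -
  obtain S where S: "S \<subseteq> V" "F = convex hull S"
    using face_of_convex_hull_subset[OF finite_imp_compact] assms by metis
  then obtain x where "x \<in> S"
    using assms(3) by (metis convex_hull_empty ex_in_conv)
  moreover have "x \<in> F"
    using S(2) hull_inc \<open>x \<in> S\<close> by metis
  ultimately show thesis
    using that S(1) by blast
qed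

lemma no_critical_point_face_part_f_coeff:
  assumes d: "d \<ge> 1" and a: "a \<noteq> 0" and "convex \<sigma>" and "0 \<notin> \<sigma>"
    and some_vertex: "inverse_vertex d \<in> \<sigma> \<or> (\<exists>j. power_vertex d j \<in> \<sigma>)"
  shows "\<not> critical_point_torus (face_part (f_coeff d a :: int^'n::finite \<Rightarrow> complex) \<sigma>) z"
proof -
  define g where "g = face_part (f_coeff d a :: int^'n \<Rightarrow> complex) \<sigma>"
  have lsupp_g: "lsupp g = {t \<in> insert (inverse_exponent d) (range (power_exponent d)). lat_to_real t \<in> \<sigma>}"
    unfolding g_def lsupp_face_part lsupp_f_coeff[OF d a] ..
  have not_all_vertices: "\<not> (inverse_vertex d \<in> \<sigma> \<and> (\<forall>j. power_vertex d j \<in> \<sigma>))"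
    using zero_in_convex_if_vertices_in assms(3,4) by blast
  obtain t0 j where "t0 \<in> lsupp g" "t0 $ j \<noteq> 0" "\<And>t. t \<in> lsupp g - {t0} \<Longrightarrow> t $ j = 0"
  proof (cases "inverse_vertex d \<in> \<sigma>")
    case False
    then obtain j where j: "power_vertex d j \<in> \<sigma>"
      using some_vertex by blast
    show thesis
    proof (rule that)
      show "power_exponent d j \<in> lsupp g"
        unfolding lsupp_g using j by (simp add: lat_to_real_power_exponent)
      show "power_exponent d j $ j \<noteq> 0"
        using d by (simp add: power_exponent_component)
      show "t $ j = 0" if "t \<in> lsupp g - {power_exponent d j}" for t
        using that False unfolding lsupp_g
        by (auto simp: lat_to_real_inverse_exponent power_exponent_component)
    qed
  next
    case True
    then obtain j where j: "power_vertex d j \<notin> \<sigma>"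
      using not_all_vertices by blast
    show thesis
    proof (rule that)
      show "inverse_exponent d \<in> lsupp g"
        unfolding lsupp_g using True by (simp add: lat_to_real_inverse_exponent)
      show "inverse_exponent d $ j \<noteq> 0"
        using d by (simp add: inverse_exponent_def)
      show "t $ j = 0" if "t \<in> lsupp g - {inverse_exponent d}" for t
        using that j unfolding lsupp_g
        by (auto simp: lat_to_real_power_exponent power_exponent_component)
    qed
  qed
  moreover have "finite (lsupp g)"
    unfolding lsupp_g by simp
  ultimately show ?thesis
    unfolding g_def[symmetric] by (metis no_critical_point_if_variable_in_single_monomial)
qed

lemma nondegenerate_f_coeff:
  assumes d: "d \<ge> 1" and a: "a \<noteq> 0"
  shows "nondegenerate (f_coeff d a :: int^'n::finite \<Rightarrow> complex)"
  unfolding nondegenerate_def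
proof (intro allI impI)
  fix \<sigma> :: "(real^'n) set"
  assume \<sigma>: "\<sigma> face_of newton_polytope (f_coeff d a :: int^'n \<Rightarrow> complex) \<and> \<sigma> \<noteq> {} \<and> 0 \<notin> \<sigma>"
  then have face: "\<sigma> face_of convex hull (insert 0 (insert (inverse_vertex d) (range (power_vertex d))))"
    unfolding newton_polytope_f_coeff[OF d a] by blast
  obtain x where "x \<in> insert 0 (insert (inverse_vertex d) (range (power_vertex d)))" "x \<in> \<sigma>"
    by (rule face_of_convex_hull_meets_points[OF _ face]) (use \<sigma> in auto)
  then have "inverse_vertex d \<in> \<sigma> \<or> (\<exists>j. power_vertex d j \<in> \<sigma>)"
    using \<sigma> by blast
  then show "\<not> (\<exists>z. critical_point_torus (face_part (f_coeff d a) \<sigma>) z)"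
    using no_critical_point_face_part_f_coeff[OF d a face_of_imp_convex[OF face]] \<sigma> by blast
qed

theorem lemma2p5:
  fixes d :: nat and a :: complex and n :: nat
  assumes "n = CARD('n::finite) + 1"
    and "d \<ge> 1" and "a \<noteq> 0"
  shows "convenient (f_coeff d a :: int^'n \<Rightarrow> complex)
     \<and> newton_polytope (f_coeff d a :: int^'n \<Rightarrow> complex) =
         {u :: real^'n. (\<Sum>i\<in>UNIV. u $ i) \<le> real d \<and>
            (\<forall>i0. (\<Sum>i\<in>UNIV. u $ i) - real n * u $ i0 \<le> real d)}
     \<and> nondegenerate (f_coeff d a :: int^'n \<Rightarrow> complex)"
proof -
  have polytope: "newton_polytope (f_coeff d a :: int^'n \<Rightarrow> complex) = halfspace_polytope d n"
    unfolding newton_polytope_f_coeff[OF assms(2,3)]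
    using convex_hull_vertices_subset_halfspace_polytope[OF assms(1)]
      halfspace_polytope_subset_convex_hull_vertices[OF assms(1,2)]
    by blast
  then have "convenient (f_coeff d a :: int^'n \<Rightarrow> complex)"
    unfolding convenient_def using zero_in_interior_halfspace_polytope[OF assms(1,2)] by simp
  then show ?thesis
    using polytope nondegenerate_f_coeff[OF assms(2,3)] unfolding halfspace_polytope_def by blast
qed

end
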